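(* In the quantum cluster algebra $\mathcal{A}_q(B,\Lambda)$ of Kronecker type, for every $n\ge0$, $$x_{n+3}=x_1^{-n-1}x_2^{n+2}+\sum_{\substack{p,r\ge0\\ p+r\le n}}\begin{bmatrix}n-r\\ p\end{bmatrix}_q\begin{bmatrix}n+1-p\\ r\end{bmatrix}_q M[2p-n-1,\,2r-n,\,n+1-r,\,p].$$
   Context: Setup as follows. Based quantum torus: $\mathbb{Z}[q^{\pm1/2}]$-algebra with basis $M[a]$, $a\in\mathbb{Z}^4$, and $M[a]M[b]=q^{\frac12a^T\Lambda b}M[a+b]$, with $B=\begin{pmatrix}0&2\\-2&0\\1&0\\0&1\end{pmatrix}$, $\Lambda=\begin{pmatrix}0&0&-1&0\\0&0&0&-1\\1&0&0&-2\\0&1&2&0\end{pmatrix}$; $x_1=M[e_1],x_2=M[e_2],y_1=M[e_3],y_2=M[e_4]$. $\mathcal{A}_q(B,\Lambda)$ is the Berenstein–Zelevinsky quantum cluster algebra with this initial quantum seed; quantum mutation at $k$ replaces $x'_k$ by $M_{\Lambda'}[-e_k+\sum_{b'_{ik}>0}b'_{ik}e_i]+M_{\Lambda'}[-e_k-\sum_{b'_{ik}<0}b'_{ik}e_i]$. For $n\ge0$, $x_{n+3}$ is the quantum cluster variable produced at the $(n+1)$-st step of mutating the initial seed successively at $1,2,1,2,\dots$ (so $x_3=M[-1,2,0,0]+M[-1,0,1,0]$). Quantum integers and binomials: $[n]_q=\frac{q^{n/2}-q^{-n/2}}{q^{1/2}-q^{-1/2}}$, $[n]_q!=\prod_{k=1}^n[k]_q$,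 $\begin{bmatrix}n\\k\end{bmatrix}_q=\frac{[n]_q!}{[k]_q![n-k]_q!}\in\mathbb{Z}[q^{\pm1/2}]$. *)

theory Defs
  imports Main
begin

text \<open>Quantum seeds are realised inside an arbitrary division ring 'k containing the
based quantum torus.  A seed is a triple (X, B, L): the cluster
X :: nat => 'k (indices 0..3), the 4x2 exchange matrix B and the 4x4
quasi-commutation matrix L (all indices 0-based).  The element v plays the role of q^(1/2).\<close>

type_synonym 'k qseed = "(nat \<Rightarrow> 'k) \<times> (nat \<Rightarrow> nat \<Rightarrow> int) \<times> (nat \<Rightarrow> nat \<Rightarrow> int)"

definition B0 :: "nat \<Rightarrow> nat \<Rightarrow> int" where
  "B0 i j = (if i = 0 \<and> j = 1 then 2 else if i = 1 \<and> j = 0 then -2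
             else if i = 2 \<and> j = 0 then 1 else if i = 3 \<and> j = 1 then 1 else 0)"

definition L0 :: "nat \<Rightarrow> nat \<Rightarrow> int" where
  "L0 i j = (if i = 0 \<and> j = 2 then -1 else if i = 1 \<and> j = 3 then -1
             else if i = 2 \<and> j = 0 then 1 else if i = 2 \<and> j = 3 then -2
             else if i = 3 \<and> j = 1 then 1 else if i = 3 \<and> j = 2 then 2 else 0)"

definition seedM :: "'k::division_ring \<Rightarrow> (nat \<Rightarrow> 'k) \<Rightarrow> (nat \<Rightarrow> nat \<Rightarrow> int) \<Rightarrow> (nat \<Rightarrow> int) \<Rightarrow> 'k" where
  "seedM v X L a =
     v powi (\<Sum>m<4. \<Sum>l<m. a l * a m * L m l)
     * (X 0 powi a 0) * (X 1 powi a 1) * (X 2 powi a 2) * (X 3 powi a 3)"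

text \<open>Matrix E_epsilon of BZ (epsilon = +1) for mutation in direction k.\<close>
definition mutE :: "(nat \<Rightarrow> nat \<Rightarrow> int) \<Rightarrow> nat \<Rightarrow> nat \<Rightarrow> nat \<Rightarrow> int" where
  "mutE B k i j = (if j \<noteq> k then (if i = j then 1 else 0)
                   else if i = k then -1 else max 0 (- B i k))"

definition mutB :: "nat \<Rightarrow> (nat \<Rightarrow> nat \<Rightarrow> int) \<Rightarrow> nat \<Rightarrow> nat \<Rightarrow> int" where
  "mutB k B i j = (if i = k \<or> j = k then - B i j
                   else B i j + (\<bar>B i k\<bar> * B k j + B i k * \<bar>B k j\<bar>) div 2)"

definition mutL :: "(nat \<Rightarrow> nat \<Rightarrow> int) \<Rightarrow> nat \<Rightarrow> (nat \<Rightarrow> nat \<Rightarrow> int) \<Rightarrow> nat \<Rightarrow> nat \<Rightarrow> int" where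
  "mutL B k L i j = (\<Sum>a<4. \<Sum>b<4. mutE B k a i * L a b * mutE B k b j)"

definition mutate :: "'k::division_ring \<Rightarrow> nat \<Rightarrow> 'k qseed \<Rightarrow> 'k qseed" where
  "mutate v k S = (case S of (X, B, L) \<Rightarrow>
     ((\<lambda>i. if i = k then
              seedM v X L (\<lambda>i. (if i = k then -1 else 0) + max 0 (B i k))
            + seedM v X L (\<lambda>i. (if i = k then -1 else 0) + max 0 (- B i k))
            else X i),
      mutB k B, mutL B k L))"

text \<open>Seeds obtained from the initial seed by mutating at 1,2,1,2,... (0-based: 0,1,0,1,...).
  Mk is the embedding of the based quantum torus basis M[a1,a2,a3,a4].\<close>
primrec kseed :: "'k::division_ring \<Rightarrow> (int \<Rightarrow> int \<Rightarrow> int \<Rightarrow> int \<Rightarrow> 'k) \<Rightarrow> nat \<Rightarrow> 'k qseed" where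
  "kseed v Mk 0 = ((\<lambda>i. if i = 0 then Mk 1 0 0 0 else if i = 1 then Mk 0 1 0 0
                         else if i = 2 then Mk 0 0 1 0 else Mk 0 0 0 1), B0, L0)"
| "kseed v Mk (Suc n) = mutate v (n mod 2) (kseed v Mk n)"

text \<open>x_{n+3} = new cluster variable produced at the (n+1)-st mutation.\<close>
definition kron_x :: "'k::division_ring \<Rightarrow> (int \<Rightarrow> int \<Rightarrow> int \<Rightarrow> int \<Rightarrow> 'k) \<Rightarrow> nat \<Rightarrow> 'k" where
  "kron_x v Mk m = fst (kseed v Mk (m - 2)) ((m - 3) mod 2)"

definition qint :: "'k::division_ring \<Rightarrow> nat \<Rightarrow> 'k" where
  "qint v n = (v ^ n - inverse v ^ n) / (v - inverse v)"

primrec qfact :: "'k::division_ring \<Rightarrow> nat \<Rightarrow> 'k" where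
  "qfact v 0 = 1"
| "qfact v (Suc n) = qfact v n * qint v (Suc n)"

definition qbinom :: "'k::division_ring \<Rightarrow> nat \<Rightarrow> nat \<Rightarrow> 'k" where
  "qbinom v n k = qfact v n / (qfact v k * qfact v (n - k))"

definition lamform :: "int \<Rightarrow> int \<Rightarrow> int \<Rightarrow> int \<Rightarrow> int \<Rightarrow> int \<Rightarrow> int \<Rightarrow> int \<Rightarrow> int" where
  "lamform a1 a2 a3 a4 b1 b2 b3 b4 =
     (let a = [a1,a2,a3,a4]; b = [b1,b2,b3,b4] in
      (\<Sum>i<4. \<Sum>j<4. a ! i * L0 i j * b ! j))"

text \<open>Mk embeds the based quantum torus A_q(B,Lambda)-ambient torus into the division ring:
  product rule, unit, and Z[v^{+-1}]-linear independence of the basis (injectivity).\<close>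
definition torus_embedding :: "'k::division_ring \<Rightarrow> (int \<Rightarrow> int \<Rightarrow> int \<Rightarrow> int \<Rightarrow> 'k) \<Rightarrow> bool" where
  "torus_embedding v Mk \<longleftrightarrow>
     (\<forall>z. v * z = z * v) \<and>
     Mk 0 0 0 0 = 1 \<and>
     (\<forall>a1 a2 a3 a4 b1 b2 b3 b4.
        Mk a1 a2 a3 a4 * Mk b1 b2 b3 b4
          = v powi (lamform a1 a2 a3 a4 b1 b2 b3 b4) * Mk (a1+b1) (a2+b2) (a3+b3) (a4+b4)) \<and>
     (\<forall>(S :: (int \<times> int \<times> int \<times> int \<times> int) set) (c :: int \<times> int \<times> int \<times> int \<times> int \<Rightarrow> int).
        finite S \<longrightarrow>
        (\<Sum>(j, a1, a2, a3, a4) \<in> S. of_int (c (j, a1, a2, a3, a4)) * v powi j * Mk a1 a2 a3 a4) = 0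
        \<longrightarrow> (\<forall>s\<in>S. c s = 0))"

end

theory Submission
  imports Defs "HOL-Library.Product_Plus"
begin

text \<open>Write \<open>X\<^sub>N\<close> for \<open>x\<^sub>N\<^sub>+\<^sub>3\<close>, so that \<open>X\<^sub>-\<^sub>2 = x\<^sub>1\<close> and \<open>X\<^sub>-\<^sub>1 = x\<^sub>2\<close>. The Laurent
  polynomials on the right-hand side, whose coefficients are products of two Gaussian binomials,
  satisfy the recurrences \<open>X\<^sub>N = Z X\<^sub>N\<^sub>-\<^sub>1 - W X\<^sub>N\<^sub>-\<^sub>2 = X\<^sub>N\<^sub>-\<^sub>1 Z - X\<^sub>N\<^sub>-\<^sub>2 W\<close> with
  \<open>Z = M[-1,1,0,0] + M[-1,-1,1,0] + M[1,-1,1,1]\<close> and \<open>W = M[0,0,1,1]\<close>: on coefficients this is the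
  product of two q-Pascal rules. As \<open>W\<close> q-commutes with every \<open>X\<^sub>N\<close>, the recurrences give by
  induction the quantum exchange relations
  \<open>X\<^sub>N X\<^sub>N\<^sub>+\<^sub>2 - X\<^sub>N\<^sub>+\<^sub>1\<^sup>2 = q\<^sup>-\<^sup>1\<^sup>/\<^sup>2 M[0,0,N+3,N+2]\<close> and
  \<open>X\<^sub>N\<^sub>+\<^sub>2 X\<^sub>N - X\<^sub>N\<^sub>+\<^sub>1\<^sup>2 = q\<^sup>1\<^sup>/\<^sup>2 M[0,0,N+3,N+2]\<close>. The seeds along the mutation sequence
  have closed forms, and in each of them the exchange relation of the next mutation is exactly
  one of these two, so the mutation replaces \<open>X\<^sub>s\<^sub>-\<^sub>2\<close> by \<open>X\<^sub>s\<close>.\<close>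

section \<open>Noncommutative algebra\<close>

definition central :: "'a::ring_1 \<Rightarrow> bool" where
  "central z \<longleftrightarrow> (\<forall>x. z * x = x * z)"

lemma centralD: "central z \<Longrightarrow> z * x = x * z"
  by (simp add: central_def)

lemma central_left_commute: "central z \<Longrightarrow> x * (z * y) = z * (x * y)"
  by (metis centralD mult.assoc)

lemma central_0 [intro]: "central 0"
  and central_1 [intro]: "central 1"
  by (simp_all add: central_def)

lemma central_mult [intro]: "central a \<Longrightarrow> central b \<Longrightarrow> central (a * b)"
  unfolding central_def by (metis mult.assoc)

lemma central_add [intro]: "central a \<Longrightarrow> central b \<Longrightarrow> central (a + b)"
  unfolding central_def by (simp add: distrib_left distrib_right)

lemma central_diff [intro]: "central a \<Longrightarrow> central b \<Longrightarrow> central (a - b)"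
  unfolding central_def by (simp add: left_diff_distrib right_diff_distrib)

lemma central_inverse [intro]:
  fixes a :: "'a::division_ring"
  assumes "central a"
  shows "central (inverse a)"
proof (cases "a = 0")
  case False
  have "inverse a * x = x * inverse a" for x
  proof -
    have "inverse a * x = inverse a * (x * a) * inverse a"
      using False by (simp add: mult.assoc)
    also have "\<dots> = inverse a * (a * x) * inverse a"
      using centralD[OF assms, of x] by simp
    finally show ?thesis
      using False by (simp flip: mult.assoc)
  qed
  then show ?thesis by (simp add: central_def)
qed auto

lemma central_power [intro]: "central a \<Longrightarrow> central (a ^ n)"
  by (induction n) auto

lemma central_power_int [intro]: "central (a::'a::division_ring) \<Longrightarrow> central (a powi n)"
  by (cases n rule: int_cases4) (auto simp: power_int_minus)

lemma inverse_twisted_commute: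
  fixes x m c :: "'a::division_ring"
  assumes "x \<noteq> 0" and "central c" and "m * x = c * (x * m)"
  shows "inverse x * m = c * (m * inverse x)"
proof -
  have "inverse x * m = inverse x * (m * x) * inverse x"
    using assms(1) by (simp add: mult.assoc)
  also have "\<dots> = inverse x * (c * (x * m)) * inverse x"
    using assms(3) by simp
  also have "\<dots> = c * (inverse x * x * (m * inverse x))"
    using central_left_commute[OF assms(2)] by (simp add: mult.assoc)
  also have "\<dots> = c * (m * inverse x)"
    using assms(1) by simp
  finally show ?thesis .
qed

lemma three_term_det_rec:
  fixes X0 X1 X2 X3 Z W c :: "'a::ring"
  assumes "X3 = Z * X2 - W * X1" and "X2 = X1 * Z - X0 * W"
    and "X0 * W = c * (W * X0)" and "X1 * W = c * (W * X1)"
  shows "X1 * X3 - X2 * X2 = c * (W * (X0 * X2 - X1 * X1))"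
proof -
  have square: "X2 * X2 = X1 * Z * X2 - X0 * W * X2"
    by (subst (1) assms(2)) (simp add: left_diff_distrib)
  have "X1 * X3 - X2 * X2 = X0 * W * X2 - X1 * W * X1"
    unfolding square assms(1) by (simp add: right_diff_distrib mult.assoc)
  also have "\<dots> = c * (W * (X0 * X2 - X1 * X1))"
    unfolding assms(3,4) by (simp add: right_diff_distrib mult.assoc)
  finally show ?thesis .
qed

lemma three_term_det_rec':
  fixes X0 X1 X2 X3 Z W c :: "'a::ring"
  assumes "X3 = X2 * Z - X1 * W" and "X2 = Z * X1 - W * X0"
    and "X2 * W = c * (W * X2)" and "X1 * W = c * (W * X1)"
  shows "X3 * X1 - X2 * X2 = c * (W * (X2 * X0 - X1 * X1))"
proof -
  have square: "X2 * X2 = X2 * Z * X1 - X2 * W * X0"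
    by (subst (2) assms(2)) (simp add: right_diff_distrib mult.assoc)
  have "X3 * X1 - X2 * X2 = X2 * W * X0 - X1 * W * X1"
    unfolding square assms(1) by (simp add: left_diff_distrib mult.assoc)
  also have "\<dots> = c * (W * (X2 * X0 - X1 * X1))"
    unfolding assms(3,4) by (simp add: right_diff_distrib mult.assoc)
  finally show ?thesis .
qed

lemma twisted_commute_scale:
  assumes "central a" and "central \<mu>" and "M * Y = \<mu> * (Y * M)"
  shows "M * (a * Y) = \<mu> * (a * Y * M)"
proof -
  have "M * (a * Y) = a * (\<mu> * (Y * M))"
    using central_left_commute[OF assms(1)] assms(3) by metis
  also have "\<dots> = \<mu> * (a * Y * M)"
    using assms(2) by (simp add: central_left_commute mult.assoc)
  finally show ?thesis .
qed

lemma twisted_component_eq_0: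
  fixes M :: "'a::division_ring" and Y \<mu> :: "'i \<Rightarrow> 'a"
  assumes "finite J" "i0 \<notin> J" "M \<noteq> 0"
    and "\<And>i. i \<in> insert i0 J \<Longrightarrow> central (\<mu> i)"
    and "\<And>i. i \<in> insert i0 J \<Longrightarrow> M * Y i = \<mu> i * (Y i * M)"
    and "\<And>i. i \<in> J \<Longrightarrow> \<mu> i \<noteq> \<mu> i0"
    and "(\<Sum>i\<in>insert i0 J. Y i) = 0"
  shows "Y i0 = 0"
  using assms
proof (induction J arbitrary: Y rule: finite_induct)
  case (insert j J)
  let ?I = "insert i0 (insert j J)"
  have "\<mu> i * Y i * M = M * Y i" if "i \<in> ?I" for i
    using insert.prems(4)[OF that] by (simp add: mult.assoc)
  then have "(\<Sum>i\<in>?I. \<mu> i * Y i) * M = (\<Sum>i\<in>?I. M * Y i)"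
    unfolding sum_distrib_right by (rule sum.cong[OF refl])
  also have "\<dots> = M * (\<Sum>i\<in>?I. Y i)"
    by (simp add: sum_distrib_left)
  finally have "(\<Sum>i\<in>?I. \<mu> i * Y i) * M = M * (\<Sum>i\<in>?I. Y i)" .
  with \<open>M \<noteq> 0\<close> insert.prems(6) have "(\<Sum>i\<in>?I. \<mu> i * Y i) = 0"
    by simp
  moreover have "(\<Sum>i\<in>?I. \<mu> j * Y i) = 0"
    using insert.prems(6) by (simp flip: sum_distrib_left)
  ultimately have "(\<Sum>i\<in>?I. (\<mu> i - \<mu> j) * Y i) = 0"
    by (simp add: left_diff_distrib sum_subtractf)
  then have "(\<Sum>i\<in>insert i0 J. (\<mu> i - \<mu> j) * Y i) = 0"
    using insert.hyps insert.prems(1) by (simp add: insert_commute)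
  moreover have "M * ((\<mu> i - \<mu> j) * Y i) = \<mu> i * ((\<mu> i - \<mu> j) * Y i * M)"
    if "i \<in> insert i0 J" for i
    using insert.prems(3,4) that by (intro twisted_commute_scale central_diff) auto
  ultimately have "(\<mu> i0 - \<mu> j) * Y i0 = 0"
    using insert.IH[of "\<lambda>i. (\<mu> i - \<mu> j) * Y i"] insert.prems by auto
  moreover have "\<mu> i0 - \<mu> j \<noteq> 0"
    using insert.prems(5)[of j] by auto
  ultimately show ?case
    by simp
qed simp

section \<open>Gaussian binomials\<close>

fun gauss_binom :: "'a::division_ring \<Rightarrow> nat \<Rightarrow> nat \<Rightarrow> 'a" where
  "gauss_binom v n 0 = 1"
| "gauss_binom v 0 (Suc k) = 0"
| "gauss_binom v (Suc n) (Suc k) =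
     v powi int (Suc k) * gauss_binom v n (Suc k) + v powi (int k - int n) * gauss_binom v n k"

definition gauss_binom_int :: "'a::division_ring \<Rightarrow> int \<Rightarrow> int \<Rightarrow> 'a" where
  "gauss_binom_int v a b = (if 0 \<le> b \<and> b \<le> a then gauss_binom v (nat a) (nat b) else 0)"

lemma gauss_binom_eq_0: "n < k \<Longrightarrow> gauss_binom v n k = 0"
proof (induction n arbitrary: k)
  case 0 then show ?case by (cases k) auto
next
  case (Suc n) then show ?case by (cases k) auto
qed

lemma gauss_binom_diag [simp]: "gauss_binom v n n = 1"
  by (induction n) (auto simp: gauss_binom_eq_0)

lemma central_gauss_binom [intro]: "central v \<Longrightarrow> central (gauss_binom v n k)"
  by (induction v n k rule: gauss_binom.induct) auto

lemma central_gauss_binom_int [intro]: "central v \<Longrightarrow> central (gauss_binom_int v a b)"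
  by (auto simp: gauss_binom_int_def)

lemma gauss_binom_int_eq_0: "b < 0 \<or> a < b \<Longrightarrow> gauss_binom_int v a b = 0"
  by (auto simp: gauss_binom_int_def)

lemma gauss_binom_int_0_right [simp]: "0 \<le> a \<Longrightarrow> gauss_binom_int v a 0 = 1"
  and gauss_binom_int_diag [simp]: "0 \<le> a \<Longrightarrow> gauss_binom_int v a a = 1"
  by (simp_all add: gauss_binom_int_def)

lemma gauss_binom_int_neg: "a < 0 \<Longrightarrow> gauss_binom_int v a b = 0"
  by (simp add: gauss_binom_int_def)

lemma gauss_binom_int_nonzero_imp: "gauss_binom_int v a b \<noteq> 0 \<Longrightarrow> 0 \<le> b \<and> b \<le> a"
  by (meson gauss_binom_int_eq_0 not_le)

lemma gauss_binom_int_of_nat [simp]: "gauss_binom_int v (int n) (int k) = gauss_binom v n k"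
  by (simp add: gauss_binom_int_def gauss_binom_eq_0)

lemma gauss_binom_int_pascal:
  assumes "a \<noteq> 0 \<or> b \<noteq> 0"
  shows "gauss_binom_int v a b =
    v powi b * gauss_binom_int v (a - 1) b + v powi (b - a) * gauss_binom_int v (a - 1) (b - 1)"
proof (cases "0 < a \<and> 0 < b")
  case True
  then have "a = int (Suc (nat (a - 1)))" "b = int (Suc (nat (b - 1)))"
    by simp_all
  then obtain n k where a: "a = int (Suc n)" and b: "b = int (Suc k)"
    by blast
  have shifts: "int (Suc n) - 1 = int n" "int (Suc k) - 1 = int k"
    "int (Suc k) - int (Suc n) = int k - int n"
    by simp_all
  show ?thesis
    unfolding a b shifts gauss_binom_int_of_nat by simp
next
  case False
  then consider "b < 0" | "b = 0" "0 < a" | "b = 0" "a < 0" | "0 < b" "a \<le> 0"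
    using assms by linarith
  then show ?thesis
    by cases (simp_all add: gauss_binom_int_eq_0)
qed

text \<open>The summand \<open>1\<close> at \<open>c = d = 0\<close> is the coefficient of the leading monomial
  \<open>M[-N-1, N+2, 0, 0]\<close>.\<close>

definition kron_coeff :: "'a::division_ring \<Rightarrow> int \<Rightarrow> int \<Rightarrow> int \<Rightarrow> 'a" where
  "kron_coeff v N c d = gauss_binom_int v (c - 1) d * gauss_binom_int v (N + 1 - d) (N + 1 - c)
     + (if c = 0 \<and> d = 0 then 1 else 0)"

lemma central_kron_coeff [intro]: "central v \<Longrightarrow> central (kron_coeff v N c d)"
  unfolding kron_coeff_def by (intro central_add) auto

lemma kron_coeff_nonzero_imp:
  "kron_coeff v N c d \<noteq> 0 \<Longrightarrow> (c = 0 \<and> d = 0) \<or> (0 \<le> d \<and> d < c \<and> c \<le> N + 1)"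
  by (cases "c = 0 \<and> d = 0") (auto simp: kron_coeff_def dest!: gauss_binom_int_nonzero_imp)

type_synonym exponent = "int \<times> int \<times> int \<times> int"

definition lam :: "exponent \<Rightarrow> exponent \<Rightarrow> int" where
  "lam a b = (case a of (a1, a2, a3, a4) \<Rightarrow> case b of (b1, b2, b3, b4) \<Rightarrow>
     lamform a1 a2 a3 a4 b1 b2 b3 b4)"

lemma lam_simps [simp]:
  "lam (a1, a2, a3, a4) (b1, b2, b3, b4) = - a1 * b3 - a2 * b4 + a3 * b1 - 2 * a3 * b4 + a4 * b2 + 2 * a4 * b3"
  by (simp add: lam_def lamform_def L0_def eval_nat_numeral lessThan_Suc algebra_simps)

lemma lam_antisym: "lam a b = - lam b a"
  by (cases a; cases b) (simp add: algebra_simps)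

text \<open>\<open>xcoeff v N\<close> is the coefficient function of \<open>X\<^sub>N\<close>: the coefficient of
  \<open>M[2d - N - 1, N + 2 - 2c, c, d]\<close> is \<open>kron_coeff v N c d\<close>, and \<open>(c, d) = (N + 1 - r, p)\<close> links it
  to the summation indices of the theorem.\<close>

definition xcoeff :: "'a::division_ring \<Rightarrow> int \<Rightarrow> exponent \<Rightarrow> 'a" where
  "xcoeff v N b = (case b of (b1, b2, c, d) \<Rightarrow>
     if b1 = 2 * d - N - 1 \<and> b2 = N + 2 - 2 * c then kron_coeff v N c d else 0)"

definition xexp :: "int \<Rightarrow> nat \<times> nat \<Rightarrow> exponent" where
  "xexp N = (\<lambda>(p, r). (2 * int p - N - 1, 2 * int r - N, N + 1 - int r, int p))"

definition xsupport :: "int \<Rightarrow> exponent set" where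
  "xsupport N = insert (- N - 1, N + 2, 0, 0) (xexp N ` {(p, r). int p + int r \<le> N})"

lemma central_xcoeff [intro]: "central v \<Longrightarrow> central (xcoeff v N b)"
  by (auto simp: xcoeff_def split: prod.split)

lemma finite_xindex: "finite {(p, r). int p + int r \<le> N}"
proof -
  have "{(p, r). int p + int r \<le> N} \<subseteq> {..nat N} \<times> {..nat N}"
    by auto
  then show ?thesis
    by (rule finite_subset) simp
qed

lemma finite_xsupport [simp]: "finite (xsupport N)"
  by (simp add: xsupport_def finite_xindex)

lemma inj_on_xexp: "inj_on (xexp N) A"
  by (auto simp: inj_on_def xexp_def)

lemma lead_notin_xexp: "(- N - 1, N + 2, 0, 0) \<notin> xexp N ` {(p, r). int p + int r \<le> N}"
  by (auto simp: xexp_def)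

lemma lam_x1_xexp_neg: "(p, r) \<in> {(p, r). int p + int r \<le> N} \<Longrightarrow> lam (1, 0, 0, 0) (xexp N (p, r)) < 0"
  by (simp add: xexp_def)

lemma xcoeff_support: "xcoeff v N b \<noteq> 0 \<Longrightarrow> b \<in> xsupport N"
proof -
  assume nonzero: "xcoeff v N b \<noteq> 0"
  obtain b1 b2 c d where b: "b = (b1, b2, c, d)"
    by (cases b) auto
  from nonzero have b1: "b1 = 2 * d - N - 1" and b2: "b2 = N + 2 - 2 * c" and "kron_coeff v N c d \<noteq> 0"
    by (auto simp: xcoeff_def b split: if_splits)
  then consider "c = 0" "d = 0" | "0 \<le> d" "d < c" "c \<le> N + 1"
    using kron_coeff_nonzero_imp by blast
  then show "b \<in> xsupport N"
  proof cases
    case 2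
    then have "b = xexp N (nat d, nat (N + 1 - c))" and "int (nat d) + int (nat (N + 1 - c)) \<le> N"
      by (simp_all add: b b1 b2 xexp_def)
    then show ?thesis
      unfolding xsupport_def by blast
  qed (simp add: b b1 b2 xsupport_def)
qed

definition zeta1 :: exponent where "zeta1 = (-1, 1, 0, 0)"
definition zeta2 :: exponent where "zeta2 = (-1, -1, 1, 0)"
definition zeta3 :: exponent where "zeta3 = (1, -1, 1, 1)"
definition omega :: exponent where "omega = (0, 0, 1, 1)"

section \<open>Quantum integers and q-Pascal rules\<close>

locale quantum_parameter =
  fixes v :: "'k::division_ring"
  assumes central_v: "central v"
    and v_nonzero: "v \<noteq> 0"
    and v_not_root_of_unity: "v powi k = 1 \<Longrightarrow> k = 0"
begin

lemma central_v_power_int [intro]: "central (v powi k)"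
  using central_v by blast

lemma v_power_int_commute: "v powi k * x = x * v powi k"
  by (rule centralD) blast

lemma v_power_int_left_commute: "x * (v powi k * y) = v powi k * (x * y)"
  by (rule central_left_commute) blast

lemma v_power_int_add: "v powi a * v powi b = v powi (a + b)"
  using v_nonzero by (simp add: power_int_add)

lemma v_power_int_add_left: "v powi a * (v powi b * x) = v powi (a + b) * x"
  by (simp add: v_power_int_add flip: mult.assoc)

lemma quantum_parameter_inverse: "quantum_parameter (inverse v)"
proof
  show "inverse v powi k = 1 \<Longrightarrow> k = 0" for k
    using v_not_root_of_unity[of "- k"] by (simp add: power_int_minus power_int_inverse)
qed (use central_v v_nonzero in auto)

lemma qint_power_int: "qint v n = (v powi int n - v powi (- int n)) * inverse (v - inverse v)"
  by (simp add: qint_def divide_inverse power_int_minus power_inverse)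

lemma qint_add: "qint v (a + b) = v powi int a * qint v b + v powi (- int b) * qint v a"
proof -
  have "v powi int (a + b) - v powi (- int (a + b)) =
      v powi int a * (v powi int b - v powi (- int b)) + v powi (- int b) * (v powi int a - v powi (- int a))"
    by (simp add: right_diff_distrib v_power_int_add algebra_simps del: power_int_of_nat)
  then show ?thesis
    unfolding qint_power_int by (simp add: distrib_right mult.assoc)
qed

lemma central_qint [intro]: "central (qint v n)"
  unfolding qint_power_int using central_v by blast

lemma qint_nonzero: "n \<noteq> 0 \<Longrightarrow> qint v n \<noteq> 0"
proof
  assume "n \<noteq> 0" and "qint v n = 0"
  have "v \<noteq> inverse v"
  proof
    assume "v = inverse v"
    then have "v powi 2 = v * inverse v"
      by (simp add: power2_eq_square)
    then show False
      using v_not_root_of_unity[of 2] v_nonzero by simp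
  qed
  then have "v powi int n = v powi (- int n)"
    using \<open>qint v n = 0\<close> by (simp add: qint_power_int)
  then have "v powi (int n + int n) = 1"
    by (metis add.right_inverse v_power_int_add power_int_0_right)
  then have "int n + int n = 0"
    by (rule v_not_root_of_unity)
  with \<open>n \<noteq> 0\<close> show False
    by simp
qed

lemma qfact_nonzero: "qfact v n \<noteq> 0"
  by (induction n) (auto simp: qint_nonzero)

text \<open>The Pascal recursion of \<open>gauss_binom\<close> is the splitting
  \<open>[n + 1] = q\<^sup>(\<^sup>k\<^sup>+\<^sup>1\<^sup>)\<^sup>/\<^sup>2 [n - k] + q\<^sup>-\<^sup>(\<^sup>n\<^sup>-\<^sup>k\<^sup>)\<^sup>/\<^sup>2 [k + 1]\<close> of a quantum integer.\<close>

lemma qfact_eq_gauss_binom: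
  "k \<le> n \<Longrightarrow> qfact v n = gauss_binom v n k * (qfact v k * qfact v (n - k))"
proof (induction n arbitrary: k)
  case 0 then show ?case by simp
next
  case (Suc n)
  show ?case
  proof (cases k)
    case (Suc j)
    show ?thesis
    proof (cases "j = n")
      case False
      with Suc.prems \<open>k = Suc j\<close> have "j < n" by simp
      have split: "qint v (Suc n) = v powi int (Suc j) * qint v (n - j) + v powi (- int (n - j)) * qint v (Suc j)"
        using qint_add[of "Suc j" "n - j"] \<open>j < n\<close> by (simp add: Suc_diff_le del: of_nat_Suc power_int_of_nat)
      have "qfact v (n - j) = qfact v (n - Suc j) * qint v (n - j)"
        using \<open>j < n\<close> by (metis Suc_diff_Suc qfact.simps(2))
      then have IH1: "qfact v n * qint v (n - j) = gauss_binom v n (Suc j) * (qfact v (Suc j) * qfact v (n - j))"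
        using Suc.IH[of "Suc j"] \<open>j < n\<close> by (simp add: mult.assoc del: qfact.simps)
      have IH2: "qfact v n * qint v (Suc j) = gauss_binom v n j * (qfact v (Suc j) * qfact v (n - j))"
        using Suc.IH[of j] \<open>j < n\<close> centralD[OF central_qint, of "Suc j" "qfact v (n - j)"]
        by (simp add: mult.assoc)
      have "qfact v (Suc n) = v powi int (Suc j) * (qfact v n * qint v (n - j))
          + v powi (- int (n - j)) * (qfact v n * qint v (Suc j))"
        by (simp only: qfact.simps split distrib_left v_power_int_left_commute)
      also have "\<dots> = gauss_binom v (Suc n) k * (qfact v k * qfact v (Suc n - k))"
        using \<open>j < n\<close> by (simp add: \<open>k = Suc j\<close> IH1 IH2 distrib_right mult.assoc of_nat_diff
            del: power_int_of_nat qfact.simps)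
      finally show ?thesis .
    qed (use Suc in simp)
  qed simp
qed

lemma qbinom_eq_gauss_binom:
  assumes "k \<le> n"
  shows "qbinom v n k = gauss_binom v n k"
proof -
  have "qfact v k * qfact v (n - k) \<noteq> 0"
    using qfact_nonzero by simp
  then show ?thesis
    unfolding qbinom_def qfact_eq_gauss_binom[OF assms]
    by (simp only: divide_inverse mult.assoc[of "gauss_binom v n k"]) simp
qed

lemma gauss_binom_inverse: "gauss_binom (inverse v) n k = gauss_binom v n k"
proof (cases "k \<le> n")
  case True
  interpret inv: quantum_parameter "inverse v"
    by (rule quantum_parameter_inverse)
  have "qint (inverse v) m = (- (v ^ m - inverse (v ^ m))) * inverse (- (v - inverse v))" for m
    by (simp add: qint_def power_inverse divide_inverse)
  then have "qint (inverse v) m = qint v m" for m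
    by (simp only: inverse_minus_eq minus_mult_minus qint_def divide_inverse power_inverse)
  then have "qfact (inverse v) m = qfact v m" for m
    by (induction m) simp_all
  then have "qbinom (inverse v) n k = qbinom v n k"
    by (simp add: qbinom_def)
  with True show ?thesis
    by (simp add: qbinom_eq_gauss_binom inv.qbinom_eq_gauss_binom)
qed (simp add: gauss_binom_eq_0)

lemma gauss_binom_int_inverse: "gauss_binom_int (inverse v) a b = gauss_binom_int v a b"
  by (simp add: gauss_binom_int_def gauss_binom_inverse)

lemma kron_coeff_inverse: "kron_coeff (inverse v) = kron_coeff v"
  by (simp add: fun_eq_iff kron_coeff_def gauss_binom_int_inverse)

lemma gauss_binom_int_pascal':
  assumes "a \<noteq> 0 \<or> b \<noteq> 0"
  shows "gauss_binom_int v a b =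
    v powi (- b) * gauss_binom_int v (a - 1) b + v powi (a - b) * gauss_binom_int v (a - 1) (b - 1)"
  using gauss_binom_int_pascal[OF assms, of "inverse v"]
  by (simp add: gauss_binom_int_inverse power_int_inverse flip: power_int_minus)

lemma gauss_binom_int_product_rec:
  fixes A p B r :: int
  defines "G \<equiv> gauss_binom_int v"
  assumes "A \<noteq> 0 \<or> p \<noteq> 0" "B \<noteq> 0 \<or> r \<noteq> 0" and "B - r + p - A = 1"
  shows "G A p * G B r =
      v powi (B - r) * (G A p * G (B - 1) (r - 1)) + v powi (p - r) * (G (A - 1) p * G (B - 1) r)
    + v powi (p - A) * (G (A - 1) (p - 1) * G B r) - v * (G (A - 1) (p - 1) * G (B - 1) (r - 1))"
proof -
  have exponents: "p + (B - r) = A + 1" "B - r + p = A + 1" "p - A + (B - r) = 1" "B - r + (p - A) = 1"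
    "p + - r = p - r"
    using assms(4) by simp_all
  have commute: "G a b * (v powi k * y) = v powi k * (G a b * y)" for a b k y
    unfolding G_def by (rule central_left_commute) blast
  have hA: "G A p = v powi p * G (A - 1) p + v powi (p - A) * G (A - 1) (p - 1)"
    unfolding G_def using assms(2) by (rule gauss_binom_int_pascal)
  have hB: "G B r = v powi (- r) * G (B - 1) r + v powi (B - r) * G (B - 1) (r - 1)"
    unfolding G_def using assms(3) by (rule gauss_binom_int_pascal')
  show ?thesis
    unfolding hA hB
    by (simp only: distrib_left distrib_right mult.assoc commute v_power_int_add_left exponents
        power_int_1_right) (simp add: algebra_simps)
qed

lemma kron_coeff_rec_interior:
  assumes "1 \<le> c" and "\<not> (c = 1 \<and> d = 0)" and "\<not> (c = N + 1 \<and> d = N + 1)"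
  shows "kron_coeff v N c d =
      v powi (c - d) * kron_coeff v (N - 1) c d + v powi (c + d - N - 1) * kron_coeff v (N - 1) (c - 1) d
    + v powi (d - c + 1) * kron_coeff v (N - 1) (c - 1) (d - 1) - v * kron_coeff v (N - 2) (c - 1) (d - 1)"
proof -
  define G where "G = gauss_binom_int v"
  define A p B r where "A = c - 1" and "p = d" and "B = N + 1 - d" and "r = N + 1 - c"
  define \<delta> :: 'k where "\<delta> = (if c = 1 \<and> d = 1 then 1 else 0)"
  have K: "kron_coeff v N c d = G A p * G B r"
    "kron_coeff v (N - 1) c d = G A p * G (B - 1) (r - 1)"
    "kron_coeff v (N - 1) (c - 1) d = G (A - 1) p * G (B - 1) r"
    "kron_coeff v (N - 1) (c - 1) (d - 1) = G (A - 1) (p - 1) * G B r + \<delta>"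
    "kron_coeff v (N - 2) (c - 1) (d - 1) = G (A - 1) (p - 1) * G (B - 1) (r - 1) + \<delta>"
    using assms by (simp_all add: kron_coeff_def A_def p_def B_def r_def G_def \<delta>_def algebra_simps)
  have exponents: "c - d = B - r" "c + d - N - 1 = p - r" "d - c + 1 = p - A"
    by (simp_all add: A_def p_def B_def r_def)
  have \<delta>: "v powi (p - A) * \<delta> = v * \<delta>"
    by (simp add: \<delta>_def A_def p_def)
  have product: "G A p * G B r =
      v powi (B - r) * (G A p * G (B - 1) (r - 1)) + v powi (p - r) * (G (A - 1) p * G (B - 1) r)
    + v powi (p - A) * (G (A - 1) (p - 1) * G B r) - v * (G (A - 1) (p - 1) * G (B - 1) (r - 1))"
    unfolding G_def using assms by (intro gauss_binom_int_product_rec) (auto simp: A_def p_def B_def r_def)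
  show ?thesis
    unfolding K exponents distrib_left \<delta> product by (simp add: algebra_simps)
qed

lemma kron_coeff_rec:
  assumes "0 \<le> N"
  shows "kron_coeff v N c d =
      v powi (c - d) * kron_coeff v (N - 1) c d + v powi (c + d - N - 1) * kron_coeff v (N - 1) (c - 1) d
    + v powi (d - c + 1) * kron_coeff v (N - 1) (c - 1) (d - 1) - v * kron_coeff v (N - 2) (c - 1) (d - 1)"
proof -
  define G where "G = gauss_binom_int v"
  consider "c \<le> 0" | "c = 1" "d = 0" | "c = N + 1" "d = N + 1"
    | "1 \<le> c" "\<not> (c = 1 \<and> d = 0)" "\<not> (c = N + 1 \<and> d = N + 1)"
    by linarith
  then show ?thesis
  proof cases
    case 1
    then show ?thesis
      by (simp add: kron_coeff_def gauss_binom_int_neg)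
  next
    case 2
    have "G (N + 1) N = v powi (- N) * G N N + v * G N (N - 1)"
      using gauss_binom_int_pascal'[of "N + 1" N] by (simp add: G_def)
    with 2 assms show ?thesis
      by (simp add: kron_coeff_def gauss_binom_int_neg G_def add.commute)
  next
    case 3
    with assms show ?thesis
      by (simp add: kron_coeff_def gauss_binom_int_neg gauss_binom_int_eq_0)
  next
    case 4
    then show ?thesis
      by (rule kron_coeff_rec_interior)
  qed
qed

lemma xcoeff_inverse: "xcoeff (inverse v) = xcoeff v"
  by (simp add: fun_eq_iff xcoeff_def kron_coeff_inverse)

lemma xcoeff_rec:
  assumes "0 \<le> N"
  shows "xcoeff v N b =
      v powi lam zeta1 (b - zeta1) * xcoeff v (N - 1) (b - zeta1)
    + v powi lam zeta2 (b - zeta2) * xcoeff v (N - 1) (b - zeta2)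
    + v powi lam zeta3 (b - zeta3) * xcoeff v (N - 1) (b - zeta3)
    - v powi lam omega (b - omega) * xcoeff v (N - 2) (b - omega)"
proof -
  obtain b1 b2 c d where b: "b = (b1, b2, c, d)"
    by (cases b) auto
  show ?thesis
  proof (cases "b1 = 2 * d - N - 1 \<and> b2 = N + 2 - 2 * c")
    case True
    then have "lam zeta1 (b - zeta1) = c - d" "lam zeta2 (b - zeta2) = c + d - N - 1"
      "lam zeta3 (b - zeta3) = d - c + 1" "lam omega (b - omega) = 1"
      "xcoeff v N b = kron_coeff v N c d" "xcoeff v (N - 1) (b - zeta1) = kron_coeff v (N - 1) c d"
      "xcoeff v (N - 1) (b - zeta2) = kron_coeff v (N - 1) (c - 1) d"
      "xcoeff v (N - 1) (b - zeta3) = kron_coeff v (N - 1) (c - 1) (d - 1)"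
      "xcoeff v (N - 2) (b - omega) = kron_coeff v (N - 2) (c - 1) (d - 1)"
      by (auto simp: b xcoeff_def zeta1_def zeta2_def zeta3_def omega_def algebra_simps)
    then show ?thesis
      using kron_coeff_rec[OF assms, of c d] by simp
  next
    case False
    then show ?thesis
      by (auto simp: b xcoeff_def zeta1_def zeta2_def zeta3_def omega_def algebra_simps)
  qed
qed

lemma xcoeff_rec':
  assumes "0 \<le> N"
  shows "xcoeff v N b =
      v powi lam (b - zeta1) zeta1 * xcoeff v (N - 1) (b - zeta1)
    + v powi lam (b - zeta2) zeta2 * xcoeff v (N - 1) (b - zeta2)
    + v powi lam (b - zeta3) zeta3 * xcoeff v (N - 1) (b - zeta3)
    - v powi lam (b - omega) omega * xcoeff v (N - 2) (b - omega)"
proof -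
  interpret inv: quantum_parameter "inverse v"
    by (rule quantum_parameter_inverse)
  have "inverse v powi k = v powi (- k)" for k
    by (simp add: power_int_inverse power_int_minus)
  then show ?thesis
    using inv.xcoeff_rec[OF assms, of b] by (simp add: xcoeff_inverse lam_antisym[of _ "b - _"])
qed

end

section \<open>Laurent polynomials in the quantum torus\<close>

definition finsupp :: "('a \<Rightarrow> 'b::zero) \<Rightarrow> bool" where
  "finsupp c \<longleftrightarrow> finite {x. c x \<noteq> 0}"

lemma finsupp_add: "finsupp c \<Longrightarrow> finsupp d \<Longrightarrow> finsupp (\<lambda>x. c x + d x :: 'b::monoid_add)"
  unfolding finsupp_def by (rule finite_subset[of _ "{x. c x \<noteq> 0} \<union> {x. d x \<noteq> 0}"]) auto

lemma finsupp_shift: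
  fixes c :: "'a::ab_group_add \<Rightarrow> 'b::mult_zero"
  assumes "finsupp c"
  shows "finsupp (\<lambda>x. u x * c (x - z))"
proof -
  have "x \<in> (+) z ` {x. c x \<noteq> 0}" if "u x * c (x - z) \<noteq> 0" for x
    using that by (intro image_eqI[of _ _ "x - z"]) auto
  then have "{x. u x * c (x - z) \<noteq> 0} \<subseteq> (+) z ` {x. c x \<noteq> 0}"
    by blast
  then show ?thesis
    using assms unfolding finsupp_def by (auto intro: finite_subset)
qed

lemma finsupp_xcoeff: "finsupp (xcoeff v N)"
  unfolding finsupp_def by (rule finite_subset[OF _ finite_xsupport[of N]]) (auto intro: xcoeff_support)

locale kronecker_torus =
  fixes v :: "'k::division_ring" and Mk :: "int \<Rightarrow> int \<Rightarrow> int \<Rightarrow> int \<Rightarrow> 'k"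
  assumes torus_embedding: "torus_embedding v Mk"
begin

lemma Mk_0: "Mk 0 0 0 0 = 1"
  using torus_embedding by (simp add: torus_embedding_def)

lemma Mk_mult:
  "Mk a1 a2 a3 a4 * Mk b1 b2 b3 b4 = v powi lam (a1, a2, a3, a4) (b1, b2, b3, b4) * Mk (a1 + b1) (a2 + b2) (a3 + b3) (a4 + b4)"
  using torus_embedding by (simp add: torus_embedding_def lam_def)

lemma Mk_linear_independent:
  assumes "finite S"
    and "(\<Sum>(j, a1, a2, a3, a4) \<in> S. of_int (c (j, a1, a2, a3, a4)) * v powi j * Mk a1 a2 a3 a4) = 0"
    and "s \<in> S"
  shows "c s = 0"
  using torus_embedding assms unfolding torus_embedding_def by blast

sublocale quantum_parameter v
proof
  show "central v"
    using torus_embedding by (simp add: torus_embedding_def central_def)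
  show "v \<noteq> 0"
  proof
    assume "v = 0"
    then show False
      using Mk_linear_independent[of "{(1, 0, 0, 0, 0)}" "\<lambda>_. 1"] by simp
  qed
  show "k = 0" if "v powi k = 1" for k
  proof (rule ccontr)
    assume "k \<noteq> 0"
    let ?c = "\<lambda>s :: int \<times> int \<times> int \<times> int \<times> int. if fst s = k then 1 else - 1 :: int"
    have "(\<Sum>(j, a1, a2, a3, a4) \<in> {(k, 0, 0, 0, 0), (0, 0, 0, 0, 0)}.
        of_int (?c (j, a1, a2, a3, a4)) * v powi j * Mk a1 a2 a3 a4) = 0"
      using \<open>k \<noteq> 0\<close> \<open>v powi k = 1\<close> by (simp add: Mk_0)
    from Mk_linear_independent[OF _ this, of "(k, 0, 0, 0, 0)"] show False
      by simp
  qed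
qed

definition mono :: "exponent \<Rightarrow> 'k" where
  "mono a = (case a of (a1, a2, a3, a4) \<Rightarrow> Mk a1 a2 a3 a4)"

lemma mono_simps [simp]: "mono (a1, a2, a3, a4) = Mk a1 a2 a3 a4"
  by (simp add: mono_def)

lemma mono_mult: "mono a * mono b = v powi lam a b * mono (a + b)"
  by (cases a; cases b) (simp add: Mk_mult)

lemma mono_commute: "mono a * mono b = v powi (2 * lam a b) * (mono b * mono a)"
  using lam_antisym[of b a] by (simp add: mono_mult v_power_int_add_left add.commute)

lemma mono_nonzero: "mono a \<noteq> 0"
proof
  assume "mono a = 0"
  moreover have "mono a * mono (- a) = 1"
    using mono_mult[of a "- a"] lam_antisym[of a a] by (cases a) (simp add: Mk_0)
  ultimately show False
    by simp
qed

text \<open>The sum runs over the support of \<open>c\<close>, so it is only meaningful for finitely supported \<open>c\<close>.\<close>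

definition lincomb :: "(exponent \<Rightarrow> 'k) \<Rightarrow> 'k" where
  "lincomb c = (\<Sum>b | c b \<noteq> 0. c b * mono b)"

lemma lincomb_eq_sum:
  assumes "finite S" and "\<And>b. c b \<noteq> 0 \<Longrightarrow> b \<in> S"
  shows "lincomb c = (\<Sum>b\<in>S. c b * mono b)"
  unfolding lincomb_def using assms by (intro sum.mono_neutral_left) auto

lemma lincomb_add:
  assumes "finsupp c" and "finsupp d"
  shows "lincomb c + lincomb d = lincomb (\<lambda>b. c b + d b)"
proof -
  let ?S = "{b. c b \<noteq> 0} \<union> {b. d b \<noteq> 0}"
  have "finite ?S"
    using assms by (simp add: finsupp_def)
  then show ?thesis
    by (subst (1 2 3) lincomb_eq_sum[of ?S]) (auto simp: distrib_right sum.distrib)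
qed

lemma lincomb_diff:
  assumes "finsupp c" and "finsupp d"
  shows "lincomb c - lincomb d = lincomb (\<lambda>b. c b - d b)"
proof -
  let ?S = "{b. c b \<noteq> 0} \<union> {b. d b \<noteq> 0}"
  have "finite ?S"
    using assms by (simp add: finsupp_def)
  then show ?thesis
    by (subst (1 2 3) lincomb_eq_sum[of ?S]) (auto simp: left_diff_distrib sum_subtractf)
qed

lemma mono_mult_lincomb:
  assumes "finsupp c" and "\<And>b. central (c b)"
  shows "mono z * lincomb c = lincomb (\<lambda>b. v powi lam z (b - z) * c (b - z))"
proof -
  let ?S = "{b. c b \<noteq> 0}"
  have "mono z * lincomb c = (\<Sum>b\<in>?S. v powi lam z b * c b * mono (z + b))"
    unfolding lincomb_def sum_distrib_left
  proof (rule sum.cong[OF refl])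
    fix b
    have "mono z * (c b * mono b) = c b * (v powi lam z b * mono (z + b))"
      using central_left_commute[OF assms(2)] by (simp add: mono_mult)
    then show "mono z * (c b * mono b) = v powi lam z b * c b * mono (z + b)"
      by (simp add: v_power_int_left_commute mult.assoc)
  qed
  also have "\<dots> = (\<Sum>b\<in>(+) z ` ?S. v powi lam z (b - z) * c (b - z) * mono b)"
    by (simp add: sum.reindex inj_on_def)
  also have "\<dots> = lincomb (\<lambda>b. v powi lam z (b - z) * c (b - z))"
    using assms(1) unfolding finsupp_def
    by (intro lincomb_eq_sum[symmetric]) (auto intro: image_eqI[of _ _ "_ - z"])
  finally show ?thesis .
qed

lemma lincomb_mult_mono:
  assumes "finsupp c"
  shows "lincomb c * mono z = lincomb (\<lambda>b. v powi lam (b - z) z * c (b - z))"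
proof -
  let ?S = "{b. c b \<noteq> 0}"
  have "lincomb c * mono z = (\<Sum>b\<in>?S. v powi lam b z * c b * mono (z + b))"
    unfolding lincomb_def sum_distrib_right
    by (rule sum.cong[OF refl]) (simp add: mult.assoc mono_mult v_power_int_commute add.commute)
  also have "\<dots> = (\<Sum>b\<in>(+) z ` ?S. v powi lam (b - z) z * c (b - z) * mono b)"
    by (simp add: sum.reindex inj_on_def)
  also have "\<dots> = lincomb (\<lambda>b. v powi lam (b - z) z * c (b - z))"
    using assms(1) unfolding finsupp_def
    by (intro lincomb_eq_sum[symmetric]) (auto intro: image_eqI[of _ _ "_ - z"])
  finally show ?thesis .
qed

lemma mono_lincomb_commute:
  assumes "\<And>b. central (c b)" and "\<And>b. c b \<noteq> 0 \<Longrightarrow> lam z b = k"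
  shows "mono z * lincomb c = v powi (2 * k) * (lincomb c * mono z)"
  unfolding lincomb_def sum_distrib_left sum_distrib_right
proof (rule sum.cong[OF refl])
  fix b
  assume "b \<in> {b. c b \<noteq> 0}"
  then have "mono z * mono b = v powi (2 * k) * (mono b * mono z)"
    using mono_commute[of z b] assms(2) by simp
  then show "mono z * (c b * mono b) = v powi (2 * k) * (c b * mono b * mono z)"
    using assms(1) by (intro twisted_commute_scale) auto
qed

section \<open>The cluster variables and their exchange relations\<close>

definition xvar :: "int \<Rightarrow> 'k" where
  "xvar N = lincomb (xcoeff v N)"

definition Zsum :: 'k where
  "Zsum = mono zeta1 + mono zeta2 + mono zeta3"

definition Wmono :: 'k where
  "Wmono = mono omega"

lemma xvar_rec:
  assumes "0 \<le> N"
  shows "xvar N = Zsum * xvar (N - 1) - Wmono * xvar (N - 2)"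
proof -
  note shift = finsupp_shift[OF finsupp_xcoeff]
  have "Zsum * xvar (N - 1) - Wmono * xvar (N - 2) =
      mono zeta1 * xvar (N - 1) + mono zeta2 * xvar (N - 1) + mono zeta3 * xvar (N - 1) - mono omega * xvar (N - 2)"
    by (simp add: Zsum_def Wmono_def distrib_right)
  also have "\<dots> = xvar N"
    unfolding xvar_def mono_mult_lincomb[OF finsupp_xcoeff central_xcoeff[OF central_v]]
    by (simp add: lincomb_add lincomb_diff finsupp_add shift xcoeff_rec[OF assms, symmetric])
  finally show ?thesis
    by simp
qed

lemma xvar_rec':
  assumes "0 \<le> N"
  shows "xvar N = xvar (N - 1) * Zsum - xvar (N - 2) * Wmono"
proof -
  note shift = finsupp_shift[OF finsupp_xcoeff]
  have "xvar (N - 1) * Zsum - xvar (N - 2) * Wmono =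
      xvar (N - 1) * mono zeta1 + xvar (N - 1) * mono zeta2 + xvar (N - 1) * mono zeta3 - xvar (N - 2) * mono omega"
    by (simp add: Zsum_def Wmono_def distrib_left)
  also have "\<dots> = xvar N"
    unfolding xvar_def lincomb_mult_mono[OF finsupp_xcoeff]
    by (simp add: lincomb_add lincomb_diff finsupp_add shift xcoeff_rec'[OF assms, symmetric])
  finally show ?thesis
    by simp
qed

lemma xvar_expansion:
  "xvar N = Mk (- N - 1) (N + 2) 0 0 +
    (\<Sum>(p, r) \<in> {(p, r). int p + int r \<le> N}.
       kron_coeff v N (N + 1 - int r) (int p) * Mk (2 * int p - N - 1) (2 * int r - N) (N + 1 - int r) (int p))"
proof -
  define T where "T = {(p, r). int p + int r \<le> N}"
  define g where "g = (- N - 1, N + 2, 0 :: int, 0 :: int)"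
  have "g \<notin> xexp N ` T"
    unfolding g_def T_def by (rule lead_notin_xexp)
  have "xvar N = (\<Sum>b\<in>insert g (xexp N ` T). xcoeff v N b * mono b)"
    unfolding xvar_def g_def T_def xsupport_def[symmetric]
    by (rule lincomb_eq_sum) (auto intro: xcoeff_support)
  also have "\<dots> = xcoeff v N g * mono g + (\<Sum>b\<in>xexp N ` T. xcoeff v N b * mono b)"
    using \<open>g \<notin> xexp N ` T\<close> finite_xindex[of N] unfolding T_def by (intro sum.insert) simp_all
  also have "xcoeff v N g = 1"
    by (simp add: g_def xcoeff_def kron_coeff_def gauss_binom_int_neg)
  also have "(\<Sum>b\<in>xexp N ` T. xcoeff v N b * mono b) =
      (\<Sum>(p, r)\<in>T. kron_coeff v N (N + 1 - int r) (int p) *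
         Mk (2 * int p - N - 1) (2 * int r - N) (N + 1 - int r) (int p))"
    unfolding sum.reindex[OF inj_on_xexp] by (rule sum.cong) (auto simp: xexp_def xcoeff_def)
  finally show ?thesis
    by (simp add: g_def T_def)
qed

lemma xvar_neg2: "xvar (- 2) = Mk 1 0 0 0"
proof -
  have "{(p, r). int p + int r \<le> - 2} = {}"
    by auto
  then show ?thesis
    by (simp add: xvar_expansion)
qed

lemma xvar_neg1: "xvar (- 1) = Mk 0 1 0 0"
proof -
  have "{(p, r). int p + int r \<le> - 1} = {}"
    by auto
  then show ?thesis
    by (simp add: xvar_expansion)
qed

text \<open>Conjugation by \<open>M[1,0,0,0]\<close> multiplies \<open>M[b]\<close> by \<open>q\<^sup>-\<^sup>b\<^sup>3\<close>, and the leading monomial is the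
  only one in the support with \<open>b\<^sub>3 = 0\<close>.\<close>

lemma xvar_nonzero: "xvar N \<noteq> 0"
proof
  assume "xvar N = 0"
  define g where "g = (- N - 1, N + 2, 0 :: int, 0 :: int)"
  define J where "J = xexp N ` {(p, r). int p + int r \<le> N}"
  define \<mu> where "\<mu> b = v powi (2 * lam (1, 0, 0, 0) b)" for b
  have "finite J"
    by (simp add: J_def finite_xindex)
  have third: "lam (1, 0, 0, 0) b < 0" if "b \<in> J" for b
    using that lam_x1_xexp_neg by (auto simp: J_def)
  have "g \<notin> J"
    unfolding g_def J_def by (rule lead_notin_xexp)
  have "xcoeff v N g * mono g = 0"
  proof (rule twisted_component_eq_0[where M = "mono (1, 0, 0, 0)" and \<mu> = \<mu>])
    show "(\<Sum>b\<in>insert g J. xcoeff v N b * mono b) = 0"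
      using \<open>xvar N = 0\<close> unfolding xvar_def g_def J_def xsupport_def[symmetric]
      by (subst (asm) lincomb_eq_sum[of "xsupport N"]) (auto intro: xcoeff_support)
    show "mono (1, 0, 0, 0) * (xcoeff v N b * mono b) = \<mu> b * (xcoeff v N b * mono b * mono (1, 0, 0, 0))"
      for b
      unfolding \<mu>_def
      by (rule twisted_commute_scale[OF central_xcoeff[OF central_v] central_v_power_int mono_commute])
    show "\<mu> b \<noteq> \<mu> g" if "b \<in> J" for b
    proof
      assume "\<mu> b = \<mu> g"
      then have "v powi (2 * lam (1, 0, 0, 0) b) = 1"
        by (simp add: \<mu>_def g_def)
      then show False
        using third[OF that] v_not_root_of_unity by fastforce
    qed
    show "central (\<mu> b)" for b
      unfolding \<mu>_def by (rule central_v_power_int)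
  qed (fact \<open>finite J\<close> \<open>g \<notin> J\<close> mono_nonzero)+
  moreover have "xcoeff v N g = 1"
    by (simp add: g_def xcoeff_def kron_coeff_def gauss_binom_int_neg)
  ultimately show False
    using mono_nonzero by simp
qed

lemma xvar_mono_commute:
  "mono (0, 0, c, d) * xvar N = v powi (2 * (d * (N + 2) - c * (N + 1))) * (xvar N * mono (0, 0, c, d))"
  unfolding xvar_def
proof (rule mono_lincomb_commute)
  fix b :: exponent
  assume "xcoeff v N b \<noteq> 0"
  moreover obtain b1 b2 b3 b4 where b: "b = (b1, b2, b3, b4)"
    by (cases b) auto
  ultimately have "b1 = 2 * b4 - N - 1" and "b2 = N + 2 - 2 * b3"
    by (auto simp: xcoeff_def split: if_splits)
  then show "lam (0, 0, c, d) b = d * (N + 2) - c * (N + 1)"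
    unfolding b lam_simps by algebra
qed (rule central_xcoeff[OF central_v])

lemma xvar_Wmono: "xvar N * Wmono = v powi (- 2) * (Wmono * xvar N)"
proof -
  have "Wmono * xvar N = v powi 2 * (xvar N * Wmono)"
    using xvar_mono_commute[of 1 1 N] by (simp add: Wmono_def omega_def)
  then show ?thesis
    by (simp only: v_power_int_add_left) simp
qed

lemma Wmono_mult_Mk: "Wmono * Mk 0 0 a b = v powi (2 * (a - b)) * Mk 0 0 (a + 1) (b + 1)"
  by (simp add: Wmono_def omega_def Mk_mult algebra_simps)

lemma Mk_left_commute: "Mk a b c d * (v powi k * y) = v powi k * (Mk a b c d * y)"
  by (rule v_power_int_left_commute)

lemma Wmono_left_commute: "Wmono * (v powi k * y) = v powi k * (Wmono * y)"
  by (rule v_power_int_left_commute)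

lemma xvar_0: "xvar 0 = Zsum * Mk 0 1 0 0 - Wmono * Mk 1 0 0 0"
  using xvar_rec[of 0] by (simp add: xvar_neg1 xvar_neg2)

lemma xvar_0': "xvar 0 = Mk 0 1 0 0 * Zsum - Mk 1 0 0 0 * Wmono"
  using xvar_rec'[of 0] by (simp add: xvar_neg1 xvar_neg2)

lemma xvar_exchange:
  assumes "- 2 \<le> N"
  shows "xvar N * xvar (N + 2) - xvar (N + 1) * xvar (N + 1) = v powi (- 1) * Mk 0 0 (N + 3) (N + 2)"
  using assms
proof (induction N rule: int_ge_induct)
  case base
  show ?case
    by (simp add: xvar_0 xvar_neg1 xvar_neg2 Zsum_def Wmono_def zeta1_def zeta2_def zeta3_def omega_def
        distrib_left distrib_right right_diff_distrib left_diff_distrib mult.assoc Mk_mult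
        Mk_left_commute v_power_int_add_left
        del: power_int_1_right power_int_minus1_right)
next
  case (step N)
  have "xvar (N + 1) * xvar (N + 3) - xvar (N + 2) * xvar (N + 2)
      = v powi (- 2) * (Wmono * (xvar N * xvar (N + 2) - xvar (N + 1) * xvar (N + 1)))"
  proof (rule three_term_det_rec)
    show "xvar (N + 3) = Zsum * xvar (N + 2) - Wmono * xvar (N + 1)"
      using xvar_rec[of "N + 3"] step.hyps by (simp add: algebra_simps)
    show "xvar (N + 2) = xvar (N + 1) * Zsum - xvar N * Wmono"
      using xvar_rec'[of "N + 2"] step.hyps by (simp add: algebra_simps)
  qed (rule xvar_Wmono)+
  also have "\<dots> = v powi (- 1) * Mk 0 0 (N + 4) (N + 3)"
    unfolding step.IH Wmono_left_commute Wmono_mult_Mk v_power_int_add_left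
    by (simp add: algebra_simps del: power_int_minus1_right)
  finally show ?case
    by (simp add: add.assoc)
qed

lemma xvar_exchange':
  assumes "- 2 \<le> N"
  shows "xvar (N + 2) * xvar N - xvar (N + 1) * xvar (N + 1) = v * Mk 0 0 (N + 3) (N + 2)"
  using assms
proof (induction N rule: int_ge_induct)
  case base
  show ?case
    by (simp add: xvar_0' xvar_neg1 xvar_neg2 Zsum_def Wmono_def zeta1_def zeta2_def zeta3_def omega_def
        distrib_left distrib_right right_diff_distrib left_diff_distrib mult.assoc Mk_mult
        Mk_left_commute v_power_int_add_left
        del: power_int_1_right power_int_minus1_right) simp
next
  case (step N)
  have "xvar (N + 3) * xvar (N + 1) - xvar (N + 2) * xvar (N + 2)
      = v powi (- 2) * (Wmono * (xvar (N + 2) * xvar N - xvar (N + 1) * xvar (N + 1)))"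
  proof (rule three_term_det_rec')
    show "xvar (N + 3) = xvar (N + 2) * Zsum - xvar (N + 1) * Wmono"
      using xvar_rec'[of "N + 3"] step.hyps by (simp add: algebra_simps)
    show "xvar (N + 2) = Zsum * xvar (N + 1) - Wmono * xvar N"
      using xvar_rec[of "N + 2"] step.hyps by (simp add: algebra_simps)
  qed (rule xvar_Wmono)+
  also have "\<dots> = v * Mk 0 0 (N + 4) (N + 3)"
  proof -
    have IH: "xvar (N + 2) * xvar N - xvar (N + 1) * xvar (N + 1) = v powi 1 * Mk 0 0 (N + 3) (N + 2)"
      using step.IH by simp
    show ?thesis
      unfolding IH Wmono_left_commute Wmono_mult_Mk v_power_int_add_left by (simp add: algebra_simps)
  qed
  finally show ?case
    by (simp add: add.assoc)
qed

lemma Mk_power: "Mk a b c d ^ n = Mk (int n * a) (int n * b) (int n * c) (int n * d)"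
  by (induction n) (simp_all add: Mk_0 Mk_mult algebra_simps)

lemma Mk_inverse: "inverse (Mk a b c d) = Mk (- a) (- b) (- c) (- d)"
  by (rule inverse_unique) (simp add: Mk_mult Mk_0 algebra_simps)

lemma Mk_power_int: "Mk a b c d powi k = Mk (k * a) (k * b) (k * c) (k * d)"
  by (cases k rule: int_cases4) (simp_all add: Mk_power power_int_minus Mk_inverse)

end

section \<open>The seeds along the mutation sequence\<close>

text \<open>After \<open>s\<close> mutations the exchange matrix is \<open>seedB s\<close>, the quasi-commutation matrix is
  \<open>seedL s\<close>, and the cluster is \<open>seedX s\<close>, which holds \<open>X\<^sub>s\<^sub>-\<^sub>2\<close> (the variable mutated next) in
  position \<open>s mod 2\<close> and \<open>X\<^sub>s\<^sub>-\<^sub>1\<close> in the other one.\<close>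

definition seedB :: "nat \<Rightarrow> nat \<Rightarrow> nat \<Rightarrow> int" where
  "seedB s i j = (if even s then
     (if i = 0 \<and> j = 1 then 2 else if i = 1 \<and> j = 0 then -2 else if i = 2 \<and> j = 0 then int s + 1
      else if i = 2 \<and> j = 1 then - int s else if i = 3 \<and> j = 0 then int s
      else if i = 3 \<and> j = 1 then 1 - int s else 0)
   else
     (if i = 0 \<and> j = 1 then -2 else if i = 1 \<and> j = 0 then 2 else if i = 2 \<and> j = 0 then - int s
      else if i = 2 \<and> j = 1 then int s + 1 else if i = 3 \<and> j = 0 then 1 - int s
      else if i = 3 \<and> j = 1 then int s else 0))"

definition seedL :: "nat \<Rightarrow> nat \<Rightarrow> nat \<Rightarrow> int" where
  "seedL s i j = (let a = int s - 1 + int (s mod 2); b = int s - int (s mod 2) in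
     if i = 0 \<and> j = 2 then a else if i = 0 \<and> j = 3 then - a - 1
     else if i = 1 \<and> j = 2 then b else if i = 1 \<and> j = 3 then - b - 1
     else if i = 2 \<and> j = 0 then - a else if i = 3 \<and> j = 0 then a + 1
     else if i = 2 \<and> j = 1 then - b else if i = 3 \<and> j = 1 then b + 1
     else if i = 2 \<and> j = 3 then -2 else if i = 3 \<and> j = 2 then 2 else 0)"

lemma seedB_0: "seedB 0 = B0"
  by (intro ext) (simp add: B0_def seedB_def)

lemma seedL_0: "seedL 0 = L0"
  by (intro ext) (auto simp: L0_def seedL_def Let_def)

lemma nat_less_4_cases: obtains "i = 0" | "i = 1" | "i = 2" | "i = 3" | "4 \<le> (i::nat)"
  by linarith

lemma sum_lessThan_4: "(\<Sum>i<4. f i) = f 0 + f 1 + f 2 + (f (3::nat) :: int)"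
  by (simp add: eval_nat_numeral)

lemma mutB_seedB: "mutB (s mod 2) (seedB s) = seedB (Suc s)"
proof (intro ext)
  fix i j
  have "even s \<and> s mod 2 = 0 \<or> odd s \<and> s mod 2 = 1 \<and> 1 \<le> s"
    by presburger
  then consider "even s" "s mod 2 = 0" | "odd s" "s mod 2 = 1" "1 \<le> s"
    by argo
  then show "mutB (s mod 2) (seedB s) i j = seedB (Suc s) i j"
    by cases (cases i rule: nat_less_4_cases; cases j rule: nat_less_4_cases;
        simp add: mutB_def seedB_def abs_if max_def)+
qed

lemma mutL_seedL: "mutL (seedB s) (s mod 2) (seedL s) = seedL (Suc s)"
proof (intro ext)
  fix i j
  have "even s \<and> s mod 2 = 0 \<and> Suc s mod 2 = 1 \<or> odd s \<and> s mod 2 = 1 \<and> Suc s mod 2 = 0 \<and> 1 \<le> s"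
    by presburger
  then consider "even s" "s mod 2 = 0" "Suc s mod 2 = 1" | "odd s" "s mod 2 = 1" "Suc s mod 2 = 0" "1 \<le> s"
    by argo
  then show "mutL (seedB s) (s mod 2) (seedL s) i j = seedL (Suc s) i j"
    by cases (cases i rule: nat_less_4_cases; cases j rule: nat_less_4_cases;
        simp add: mutL_def sum_lessThan_4 mutE_def seedB_def seedL_def Let_def abs_if max_def)+
qed

context kronecker_torus
begin

definition seedX :: "nat \<Rightarrow> nat \<Rightarrow> 'k" where
  "seedX s i = (if i = s mod 2 then xvar (int s - 2) else if i = 1 - s mod 2 then xvar (int s - 1)
     else if i = 2 then Mk 0 0 1 0 else Mk 0 0 0 1)"

lemma Mk_frozen_powers: "Mk 0 0 1 0 powi c * Mk 0 0 0 1 powi d = v powi (- 2 * c * d) * Mk 0 0 c d"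
  by (simp add: Mk_power_int Mk_mult)

lemma sum_lessThan_4_triangle:
  "(\<Sum>m<(4::nat). \<Sum>l<m. f l m) = f 0 1 + f 0 2 + f 1 2 + f 0 3 + f 1 3 + (f 2 3 :: int)"
  by (simp add: eval_nat_numeral)

lemma seedM_exchange_pos:
  "seedM v (seedX s) (seedL s) (\<lambda>i. (if i = s mod 2 then -1 else 0) + max 0 (seedB s i (s mod 2)))
     = v powi (- 1) * (inverse (xvar (int s - 2)) * Mk 0 0 (int s + 1) (int s))"
proof -
  have "even s \<and> s mod 2 = 0 \<or> odd s \<and> s mod 2 = 1 \<and> 1 \<le> s"
    by presburger
  then have "seedM v (seedX s) (seedL s) (\<lambda>i. (if i = s mod 2 then -1 else 0) + max 0 (seedB s i (s mod 2)))
     = v powi (2 * int s * int s + 2 * int s - 1) * inverse (xvar (int s - 2))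
       * (Mk 0 0 1 0 powi (int s + 1) * Mk 0 0 0 1 powi int s)"
    by (elim disjE conjE)
      (simp_all add: seedM_def sum_lessThan_4_triangle seedX_def seedB_def seedL_def Let_def algebra_simps)
  also have "\<dots> = v powi (- 1) * (inverse (xvar (int s - 2)) * Mk 0 0 (int s + 1) (int s))"
    unfolding Mk_frozen_powers mult.assoc v_power_int_left_commute[of "inverse _"] v_power_int_add_left
    by (simp add: algebra_simps)
  finally show ?thesis .
qed

lemma seedM_exchange_neg:
  "seedM v (seedX s) (seedL s) (\<lambda>i. (if i = s mod 2 then -1 else 0) + max 0 (- seedB s i (s mod 2)))
     = (if even s then inverse (xvar (int s - 2)) * (xvar (int s - 1) * xvar (int s - 1))
        else xvar (int s - 1) * xvar (int s - 1) * inverse (xvar (int s - 2)))"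
proof -
  have "even s \<and> s mod 2 = 0 \<or> odd s \<and> s mod 2 = 1 \<and> 1 \<le> s"
    by presburger
  then show ?thesis
    by (elim disjE conjE)
      (simp_all add: seedM_def sum_lessThan_4_triangle seedX_def seedB_def seedL_def Let_def
        power2_eq_square mult.assoc)
qed

lemma seedM_exchange:
  "seedM v (seedX s) (seedL s) (\<lambda>i. (if i = s mod 2 then -1 else 0) + max 0 (seedB s i (s mod 2)))
   + seedM v (seedX s) (seedL s) (\<lambda>i. (if i = s mod 2 then -1 else 0) + max 0 (- seedB s i (s mod 2)))
   = xvar (int s)"
proof -
  define x0 x1 M where "x0 = xvar (int s - 2)" and "x1 = xvar (int s - 1)"
    and "M = Mk 0 0 (int s + 1) (int s)"
  have "x0 \<noteq> 0"
    by (simp add: x0_def xvar_nonzero)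
  show ?thesis
  proof (cases "even s")
    case True
    have "x0 * xvar (int s) = x1 * x1 + v powi (- 1) * M"
      using xvar_exchange[of "int s - 2"] by (simp add: x0_def x1_def M_def algebra_simps)
    then have solved: "xvar (int s) = inverse x0 * (x1 * x1 + v powi (- 1) * M)"
      using \<open>x0 \<noteq> 0\<close> by (metis inverse_unique left_inverse mult.assoc mult_1_left)
    from True solved show ?thesis
      unfolding seedM_exchange_pos seedM_exchange_neg x0_def[symmetric] x1_def[symmetric] M_def[symmetric]
      using central_left_commute[OF central_inverse[OF central_v], of "inverse x0"]
      by (simp add: distrib_left add.commute)
  next
    case False
    have "xvar (int s) * x0 = x1 * x1 + v * M"
      using xvar_exchange'[of "int s - 2"] by (simp add: x0_def x1_def M_def algebra_simps)
    then have solved: "xvar (int s) = (x1 * x1 + v * M) * inverse x0"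
      using \<open>x0 \<noteq> 0\<close> by (metis mult.assoc right_inverse mult_1_right)
    have "M * x0 = v powi 2 * (x0 * M)"
      using xvar_mono_commute[of "int s + 1" "int s" "int s - 2"] by (simp add: x0_def M_def algebra_simps)
    then have twist: "inverse x0 * M = v powi 2 * (M * inverse x0)"
      using \<open>x0 \<noteq> 0\<close> by (intro inverse_twisted_commute) (auto intro: central_v)
    have "v powi (- 1) * (inverse x0 * M) = v * (M * inverse x0)"
      unfolding twist v_power_int_add_left by simp
    with False solved show ?thesis
      unfolding seedM_exchange_pos seedM_exchange_neg x0_def[symmetric] x1_def[symmetric] M_def[symmetric]
      by (simp add: distrib_right add.commute mult.assoc)
  qed
qed

lemma kseed_eq: "kseed v Mk s = (seedX s, seedB s, seedL s)"
proof (induction s)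
  case 0
  have "(\<lambda>i. if i = 0 then Mk 1 0 0 0 else if i = 1 then Mk 0 1 0 0 else if i = 2 then Mk 0 0 1 0
      else Mk 0 0 0 1) = seedX 0"
    by (intro ext) (simp add: seedX_def xvar_neg1 xvar_neg2)
  then show ?case
    by (simp add: seedB_0 seedL_0)
next
  case (Suc s)
  have "1 - s mod 2 = Suc s mod 2" and "1 - Suc s mod 2 = s mod 2" and "Suc s mod 2 \<noteq> s mod 2"
    by presburger+
  then have "(\<lambda>i. if i = s mod 2 then
        seedM v (seedX s) (seedL s) (\<lambda>i. (if i = s mod 2 then -1 else 0) + max 0 (seedB s i (s mod 2)))
      + seedM v (seedX s) (seedL s) (\<lambda>i. (if i = s mod 2 then -1 else 0) + max 0 (- seedB s i (s mod 2)))
      else seedX s i) = seedX (Suc s)"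
    by (auto simp: fun_eq_iff seedM_exchange seedX_def)
  then show ?case
    using Suc by (simp add: mutate_def mutB_seedB mutL_seedL)
qed

lemma kron_x_eq_xvar: "kron_x v Mk (n + 3) = xvar (int n)"
proof -
  have "1 - Suc n mod 2 = n mod 2" and "n mod 2 \<noteq> Suc n mod 2"
    by presburger+
  then show ?thesis
    by (simp add: kron_x_def kseed_eq seedX_def del: kseed.simps)
qed

lemma xvar_formula:
  "xvar (int n) = Mk 1 0 0 0 powi (- int n - 1) * Mk 0 1 0 0 ^ (n + 2)
     + (\<Sum>(p, r) \<in> {(p, r). p + r \<le> n}. qbinom v (n - r) p * qbinom v (n + 1 - p) r
          * Mk (2 * int p - int n - 1) (2 * int r - int n) (int n + 1 - int r) (int p))"
proof -
  have "Mk 1 0 0 0 powi (- int n - 1) * Mk 0 1 0 0 ^ (n + 2) = Mk (- int n - 1) (int n + 2) 0 0"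
    by (simp add: Mk_power_int Mk_power Mk_mult add.commute)
  moreover have "{(p, r). int p + int r \<le> int n} = {(p, r). p + r \<le> n}"
    by (simp only: of_nat_add[symmetric] of_nat_le_iff)
  moreover have "kron_coeff v (int n) (int n + 1 - int r) (int p) = qbinom v (n - r) p * qbinom v (n + 1 - p) r"
    if "p + r \<le> n" for p r
  proof -
    have shifts: "int n - int r = int (n - r)" "int n + 1 - int p = int (Suc n - p)"
      using that by simp_all
    have "kron_coeff v (int n) (int n + 1 - int r) (int p)
        = gauss_binom_int v (int n - int r) (int p) * gauss_binom_int v (int n + 1 - int p) (int r)"
      using that by (simp add: kron_coeff_def)
    also have "\<dots> = qbinom v (n - r) p * qbinom v (n + 1 - p) r"
      unfolding shifts gauss_binom_int_of_nat using that by (simp add: qbinom_eq_gauss_binom)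
    finally show ?thesis .
  qed
  ultimately show ?thesis
    unfolding xvar_expansion by (auto intro!: sum.cong simp: algebra_simps)
qed

end

theorem mainTheorem5:
  fixes v :: "'k::division_ring" and Mk :: "int \<Rightarrow> int \<Rightarrow> int \<Rightarrow> int \<Rightarrow> 'k"
  assumes "torus_embedding v Mk"
  shows "kron_x v Mk (n + 3) =
           Mk 1 0 0 0 powi (- int n - 1) * Mk 0 1 0 0 ^ (n + 2)
         + (\<Sum>(p, r) \<in> {(p, r). p + r \<le> n}.
              qbinom v (n - r) p * qbinom v (n + 1 - p) r
              * Mk (2 * int p - int n - 1) (2 * int r - int n) (int n + 1 - int r) (int p))"
proof -
  interpret kronecker_torus v Mk
    by unfold_locales (rule assms)
  show ?thesis
    unfolding kron_x_eq_xvar by (rule xvar_formula)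
qed

end
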